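(* We have $[A,x]=[A,A]=x^NA$, where $[A,x]=\{ax-xa:a\in A\}$ and $[A,A]$ is the span of all commutators.
   Context: Let $\Bbbk$ be a field of characteristic zero and $N\geq1$ an integer. Let $A=A_N$ be the $\Bbbk$-algebra generated by $x,y$ subject to the relation $yx-xy=x^N$. *)

theory Defs
  imports "HOL-Library.Poly_Mapping"
begin

text \<open>The free associative algebra k<x,y> is realised as finitely supported functions
  from words to k, with convolution product.\<close>

datatype word = Word "bool list"

instantiation word :: monoid_add
begin
fun plus_word :: "word \<Rightarrow> word \<Rightarrow> word" where
  "plus_word (Word u) (Word v) = Word (u @ v)"
definition zero_word :: word where "zero_word = Word []"
instance
proof
  fix a b c :: word
  show "a + b + c = a + (b + c)" by (cases a; cases b; cases c) simp
  show "0 + a = a" by (cases a) (simp add: zero_word_def)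
  show "a + 0 = a" by (cases a) (simp add: zero_word_def)
qed
end

type_synonym 'k freealg = "word \<Rightarrow>\<^sub>0 'k"

definition genx :: "'k::field freealg" where
  "genx = Poly_Mapping.single (Word [False]) 1"

definition geny :: "'k::field freealg" where
  "geny = Poly_Mapping.single (Word [True]) 1"

definition scal :: "'k::field \<Rightarrow> 'k freealg" where
  "scal c = Poly_Mapping.single 0 c"

definition relA :: "nat \<Rightarrow> 'k::field freealg" where
  "relA N = geny * genx - genx * geny - genx ^ N"

inductive_set tsideal :: "'k::field freealg \<Rightarrow> 'k freealg set" for r where
  zero: "0 \<in> tsideal r"
| gen: "a * r * b \<in> tsideal r"
| add: "p \<in> tsideal r \<Longrightarrow> q \<in> tsideal r \<Longrightarrow> p + q \<in> tsideal r"

inductive_set comm_span :: "'k::field freealg set" where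
  zero: "0 \<in> comm_span"
| gen: "scal c * (a * b - b * a) \<in> comm_span"
| add: "p \<in> comm_span \<Longrightarrow> q \<in> comm_span \<Longrightarrow> p + q \<in> comm_span"

text \<open>Image in A_N = k<x,y>/(yx-xy-x^N) of a subset S of the free algebra,
  represented as the full preimage S + I.\<close>
definition inA :: "nat \<Rightarrow> 'k::field freealg set \<Rightarrow> 'k freealg set" where
  "inA N S = {f. \<exists>s\<in>S. f - s \<in> tsideal (relA N)}"

end

theory Submission
  imports Defs
begin

text \<open>Let I be the ideal of the relation and read [A,x], [A,A] and x^N A as subsets of the free
  algebra modulo I. Trivially [A,x] \<subseteq> [A,A]. Modulo I, x^N A is a two-sided ideal, since
  y x^N = x^N y + N x^(2N-1), and yx - xy = x^N lies in it; so the generators, hence all elements,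
  commute modulo x^N A, giving [A,A] \<subseteq> x^N A. Conversely the ordered monomials x^i y^j span A and
  [A,x] is stable under left multiplication by x, so it suffices that x^N y^j \<in> [A,x]. This follows by
  induction on j: [y^(j+1), x] = (j+1) x^N y^j plus a combination of the x^(N+i) y^t with t < j, and
  j+1 is invertible in characteristic zero.\<close>

lemma update_eq_add_single:
  assumes "a \<notin> Poly_Mapping.keys f"
  shows "Poly_Mapping.update a b f = f + Poly_Mapping.single a b"
  using assms
  by (intro poly_mapping_eqI) (auto simp: lookup_update lookup_add lookup_single when_def in_keys_iff)

lemma scal_commute: "scal c * (f::'k::field freealg) = f * scal c"
proof (induction f rule: update_induct)
  case (update f a b)
  then show ?case
    by (simp add: update_eq_add_single scal_def distrib_left distrib_right mult_single mult.commute)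
qed simp

lemma scal_mult: "scal c * scal d = (scal (c * d) :: 'k::field freealg)"
  by (simp add: scal_def mult_single)

lemma scal_one: "scal 1 = (1::'k::field freealg)"
  by (simp add: scal_def)

lemma scal_of_nat: "scal (of_nat n) = (of_nat n::'k::field freealg)"
  by (simp add: scal_def)

lemma freealg_induct [case_names scal genx geny add mult]:
  fixes P :: "'k::field freealg \<Rightarrow> bool"
  assumes scal: "\<And>c. P (scal c)" and x: "P genx" and y: "P geny"
    and add: "\<And>f g. P f \<Longrightarrow> P g \<Longrightarrow> P (f + g)"
    and mult: "\<And>f g. P f \<Longrightarrow> P g \<Longrightarrow> P (f * g)"
  shows "P f"
proof -
  have letter: "P (Poly_Mapping.single (Word [b]) 1)" for b
    using x y by (cases b) (simp_all add: genx_def geny_def)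
  have word: "P (Poly_Mapping.single (Word w) c)" for w c
  proof (induction w arbitrary: c)
    case Nil
    then show ?case using scal[of c] by (simp add: scal_def zero_word_def)
  next
    case (Cons b w)
    have "Poly_Mapping.single (Word (b # w)) c
        = Poly_Mapping.single (Word [b]) 1 * (Poly_Mapping.single (Word w) c :: 'k freealg)"
      by (simp add: mult_single)
    then show ?case using mult[OF letter Cons.IH] by simp
  qed
  show ?thesis
  proof (induction f rule: update_induct)
    case const
    then show ?case using scal[of 0] by (simp add: scal_def)
  next
    case (update f u c)
    then show ?case using add word by (cases u) (simp add: update_eq_add_single)
  qed
qed

lemma tsideal_mult_left: "p \<in> tsideal r \<Longrightarrow> c * p \<in> tsideal r"
proof (induction rule: tsideal.induct)
  case (gen a b)
  then show ?case using tsideal.gen[of "c * a" r b] by (simp add: mult.assoc)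
qed (auto intro: tsideal.intros simp: distrib_left)

lemma tsideal_mult_right: "p \<in> tsideal r \<Longrightarrow> p * c \<in> tsideal r"
proof (induction rule: tsideal.induct)
  case (gen a b)
  then show ?case using tsideal.gen[of a r "b * c"] by (simp add: mult.assoc)
qed (auto intro: tsideal.intros simp: distrib_right)

lemma tsideal_generator: "r \<in> tsideal r"
  using tsideal.gen[of 1 r 1] by simp

inductive_set lin_span :: "'k::field freealg set \<Rightarrow> 'k freealg set" for G where
  zero: "0 \<in> lin_span G"
| smult: "g \<in> G \<Longrightarrow> scal c * g \<in> lin_span G"
| add: "p \<in> lin_span G \<Longrightarrow> q \<in> lin_span G \<Longrightarrow> p + q \<in> lin_span G"

definition lin_closed :: "'k::field freealg set \<Rightarrow> bool" where
  "lin_closed V \<longleftrightarrow> 0 \<in> V \<and> (\<forall>p\<in>V. \<forall>q\<in>V. p + q \<in> V) \<and> (\<forall>c. \<forall>p\<in>V. scal c * p \<in> V)"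

lemma lin_closedI:
  "0 \<in> V \<Longrightarrow> (\<And>p q. p \<in> V \<Longrightarrow> q \<in> V \<Longrightarrow> p + q \<in> V) \<Longrightarrow> (\<And>c p. p \<in> V \<Longrightarrow> scal c * p \<in> V)
    \<Longrightarrow> lin_closed V"
  unfolding lin_closed_def by blast

lemma lin_closedD:
  assumes "lin_closed V"
  shows lin_closed_zero: "0 \<in> V"
    and lin_closed_add: "p \<in> V \<Longrightarrow> q \<in> V \<Longrightarrow> p + q \<in> V"
    and lin_closed_scal: "p \<in> V \<Longrightarrow> scal c * p \<in> V"
  using assms unfolding lin_closed_def by blast+

lemma lin_closed_of_nat: "lin_closed V \<Longrightarrow> p \<in> V \<Longrightarrow> of_nat n * p \<in> V"
  using lin_closed_scal[of V p "of_nat n"] by (simp add: scal_of_nat)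

lemma lin_closed_uminus: "lin_closed V \<Longrightarrow> p \<in> V \<Longrightarrow> - p \<in> V"
  using lin_closed_scal[of V p "- 1"] by (simp add: scal_def single_uminus)

lemma lin_span_base: "g \<in> G \<Longrightarrow> g \<in> lin_span G"
  using lin_span.smult[of g G 1] by (simp add: scal_one)

lemma lin_closed_lin_span: "lin_closed (lin_span G)"
proof (rule lin_closedI)
  show "scal c * p \<in> lin_span G" if "p \<in> lin_span G" for c p
    using that
  proof (induction rule: lin_span.induct)
    case (smult g d)
    then show ?case using lin_span.smult[of g G "c * d"] by (simp add: mult.assoc[symmetric] scal_mult)
  qed (auto intro: lin_span.intros simp: distrib_left)
qed (auto intro: lin_span.intros)

lemma lin_span_least:
  assumes "lin_closed V" and "G \<subseteq> V"
  shows "lin_span G \<subseteq> V"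
proof
  show "p \<in> V" if "p \<in> lin_span G" for p
    using that by induction (use assms lin_closedD in blast)+
qed

lemma mult_lin_span_mem:
  assumes "lin_closed V" and "\<And>g. g \<in> G \<Longrightarrow> a * g \<in> V" and "p \<in> lin_span G"
  shows "a * p \<in> V"
  using assms(3)
proof induction
  case (smult g c)
  have "a * (scal c * g) = scal c * (a * g)"
    by (simp add: scal_commute mult.assoc)
  then show ?case using smult assms(1,2) lin_closed_scal by metis
qed (use assms(1) lin_closedD in \<open>auto simp: distrib_left\<close>)

lemma subset_inA: "S \<subseteq> inA N S"
proof
  show "s \<in> inA N S" if "s \<in> S" for s
    unfolding inA_def using that tsideal.zero[of "relA N"] by (intro CollectI bexI[of _ s]) simp_all
qed

lemma inA_transfer:
  assumes "g \<in> inA N S" and "f - g \<in> tsideal (relA N)"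
  shows "f \<in> inA N S"
proof -
  obtain s where "s \<in> S" and "g - s \<in> tsideal (relA N)"
    using assms(1) unfolding inA_def by blast
  moreover have "f - s = (f - g) + (g - s)"
    by simp
  ultimately have "f - s \<in> tsideal (relA N)"
    using assms(2) tsideal.add by metis
  with \<open>s \<in> S\<close> show ?thesis
    unfolding inA_def by blast
qed

lemma inA_subset_inA:
  assumes "S \<subseteq> inA N T"
  shows "inA N S \<subseteq> inA N T"
proof
  fix f
  assume "f \<in> inA N S"
  then obtain s where "s \<in> S" and "f - s \<in> tsideal (relA N)"
    unfolding inA_def by blast
  then show "f \<in> inA N T"
    using assms inA_transfer by blast
qed

lemma tsideal_subset_inA: "0 \<in> S \<Longrightarrow> tsideal (relA N) \<subseteq> inA N S"
  using inA_transfer[of 0 N S] subset_inA by force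

lemma inA_mult_left:
  assumes "\<And>s. s \<in> S \<Longrightarrow> c * s \<in> inA N T" and "f \<in> inA N S"
  shows "c * f \<in> inA N T"
proof -
  obtain s where "s \<in> S" and "f - s \<in> tsideal (relA N)"
    using assms(2) unfolding inA_def by blast
  then have "c * f - c * s \<in> tsideal (relA N)"
    using tsideal_mult_left[of "f - s" _ c] by (simp add: right_diff_distrib)
  then show ?thesis
    using assms(1) \<open>s \<in> S\<close> inA_transfer by blast
qed

lemma inA_mult_right:
  assumes "\<And>s. s \<in> S \<Longrightarrow> s * c \<in> inA N T" and "f \<in> inA N S"
  shows "f * c \<in> inA N T"
proof -
  obtain s where "s \<in> S" and "f - s \<in> tsideal (relA N)"
    using assms(2) unfolding inA_def by blast
  then have "f * c - s * c \<in> tsideal (relA N)"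
    using tsideal_mult_right[of "f - s" _ c] by (simp add: left_diff_distrib)
  then show ?thesis
    using assms(1) \<open>s \<in> S\<close> inA_transfer by blast
qed

lemma lin_closed_inA:
  assumes "lin_closed S"
  shows "lin_closed (inA N S)"
proof (rule lin_closedI)
  show "0 \<in> inA N S"
    using subset_inA lin_closed_zero[OF assms] by blast
  show "scal c * p \<in> inA N S" if "p \<in> inA N S" for c p
    using inA_mult_left[OF _ that] subset_inA lin_closed_scal[OF assms] by blast
  show "p + q \<in> inA N S" if p: "p \<in> inA N S" and q: "q \<in> inA N S" for p q
  proof -
    obtain s t where "s \<in> S" "t \<in> S" and
      "p - s \<in> tsideal (relA N)" "q - t \<in> tsideal (relA N)"
      using p q unfolding inA_def by blast
    then have "(p + q) - (s + t) \<in> tsideal (relA N)"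
      using tsideal.add[of "p - s" _ "q - t"] by (simp add: algebra_simps)
    moreover have "s + t \<in> inA N S"
      using lin_closed_add[OF assms \<open>s \<in> S\<close> \<open>t \<in> S\<close>] subset_inA by blast
    ultimately show ?thesis
      using inA_transfer by blast
  qed
qed

lemma inA_left_ideal:
  assumes S: "lin_closed S"
    and x: "\<And>s. s \<in> S \<Longrightarrow> genx * s \<in> inA N S"
    and y: "\<And>s. s \<in> S \<Longrightarrow> geny * s \<in> inA N S"
    and "f \<in> inA N S"
  shows "c * f \<in> inA N S"
proof -
  have "\<forall>f \<in> inA N S. c * f \<in> inA N S"
  proof (induction c rule: freealg_induct)
    case (scal c)
    have "scal c * s \<in> inA N S" if "s \<in> S" for s
      using lin_closed_scal[OF S that] subset_inA by blast
    then show ?case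
      using inA_mult_left by blast
  next
    case genx
    then show ?case
      using inA_mult_left[OF x] by blast
  next
    case geny
    then show ?case
      using inA_mult_left[OF y] by blast
  next
    case (add g h)
    then show ?case
      using lin_closed_add[OF lin_closed_inA[OF S]] by (simp add: distrib_right)
  next
    case (mult g h)
    then show ?case
      by (simp add: mult.assoc)
  qed
  then show ?thesis
    using assms(4) by blast
qed

lemma y_xpow_commutator:
  assumes "N \<ge> 1"
  shows "geny * (genx :: 'k::field freealg) ^ m - genx ^ m * geny - of_nat m * genx ^ (m + N - 1)
    \<in> tsideal (relA N)"
proof (induction m)
  case 0
  then show ?case by (simp add: tsideal.zero)
next
  case (Suc m)
  define X Y where "X = (genx :: 'k freealg)" and "Y = (geny :: 'k freealg)"
  have step: "X ^ (m + N - 1) * X = X ^ (m + N)"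
    using assms by (simp flip: power_Suc2)
  have "Y * X ^ Suc m - X ^ Suc m * Y - of_nat (Suc m) * X ^ (Suc m + N - 1)
      = (Y * X ^ m - X ^ m * Y - of_nat m * X ^ (m + N - 1)) * X + X ^ m * (Y * X - X * Y - X ^ N)"
    using step by (simp add: algebra_simps power_Suc2 power_add[symmetric] del: power_Suc)
  then show ?case
    using tsideal.add[OF tsideal_mult_right[OF Suc.IH] tsideal_mult_left[OF tsideal_generator]]
    by (simp add: X_def Y_def relA_def)
qed

abbreviation xpow_multiples :: "nat \<Rightarrow> 'k::field freealg set" where
  "xpow_multiples N \<equiv> {genx ^ N * a | a. True}"

lemma lin_closed_xpow_multiples: "lin_closed (xpow_multiples N :: 'k::field freealg set)"
proof (rule lin_closedI)
  show "0 \<in> xpow_multiples N"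
    by (intro CollectI exI[of _ 0]) simp
  show "p + q \<in> xpow_multiples N" if p: "p \<in> xpow_multiples N" and q: "q \<in> xpow_multiples N"
    for p q :: "'k freealg"
  proof -
    obtain a b where "p = genx ^ N * a" and "q = genx ^ N * b"
      using p q by blast
    then have "p + q = genx ^ N * (a + b)"
      by (simp add: distrib_left)
    then show ?thesis
      by blast
  qed
  show "scal c * p \<in> xpow_multiples N" if p: "p \<in> xpow_multiples N" for c and p :: "'k freealg"
  proof -
    obtain a where "p = genx ^ N * a"
      using p by blast
    then have "scal c * p = genx ^ N * (scal c * a)"
      by (simp only: mult.assoc[symmetric] scal_commute[of c "genx ^ N"])
    then show ?thesis
      by blast
  qed
qed

lemma y_mult_xpow_multiple:
  assumes "N \<ge> 1"
  shows "geny * ((genx :: 'k::field freealg) ^ N * a) \<in> inA N (xpow_multiples N)"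
proof -
  have "of_nat N * genx ^ (N + N - 1) = of_nat N * ((genx :: 'k freealg) ^ N * genx ^ (N - 1))"
    using assms by (simp flip: power_add)
  also have "\<dots> = genx ^ N * (of_nat N * genx ^ (N - 1))"
    by (simp only: mult.assoc[symmetric] mult_of_nat_commute[of N "genx ^ N"])
  finally have power: "of_nat N * genx ^ (N + N - 1) = genx ^ N * (of_nat N * (genx :: 'k freealg) ^ (N - 1))" .
  have "geny * (genx ^ N * a) - genx ^ N * (geny * a + of_nat N * genx ^ (N - 1) * a)
      = (geny * genx ^ N - genx ^ N * geny - genx ^ N * (of_nat N * genx ^ (N - 1))) * a"
    by (simp add: algebra_simps)
  also have "\<dots> \<in> tsideal (relA N)"
    using tsideal_mult_right[OF y_xpow_commutator[OF assms, of N], of a] by (simp only: power)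
  finally have diff: "geny * (genx ^ N * a) - genx ^ N * (geny * a + of_nat N * genx ^ (N - 1) * a)
    \<in> tsideal (relA N)" .
  have "genx ^ N * (geny * a + of_nat N * genx ^ (N - 1) * a) \<in> inA N (xpow_multiples N)"
    by (rule subset_inA[THEN subsetD]) blast
  then show ?thesis
    using diff by (rule inA_transfer)
qed

lemma inA_xpow_multiples_mult_left:
  fixes f :: "'k::field freealg"
  assumes "N \<ge> 1" and "f \<in> inA N (xpow_multiples N)"
  shows "c * f \<in> inA N (xpow_multiples N)"
proof (rule inA_left_ideal[OF lin_closed_xpow_multiples _ _ assms(2)])
  show "genx * s \<in> inA N (xpow_multiples N)" if s: "s \<in> xpow_multiples N" for s :: "'k freealg"
  proof -
    obtain a where "s = genx ^ N * a"
      using s by blast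
    then have "genx * s = genx ^ N * (genx * a)"
      by (simp add: power_commutes flip: mult.assoc)
    then show ?thesis
      by (intro subset_inA[THEN subsetD]) blast
  qed
  show "geny * s \<in> inA N (xpow_multiples N)" if "s \<in> xpow_multiples N" for s
    using that y_mult_xpow_multiple[OF assms(1)] by blast
qed

lemma inA_xpow_multiples_mult_right:
  fixes f :: "'k::field freealg"
  assumes "f \<in> inA N (xpow_multiples N)"
  shows "f * c \<in> inA N (xpow_multiples N)"
proof (rule inA_mult_right[OF _ assms])
  show "s * c \<in> inA N (xpow_multiples N)" if s: "s \<in> xpow_multiples N" for s :: "'k freealg"
  proof -
    obtain a where "s * c = genx ^ N * (a * c)"
      using s by (auto simp: mult.assoc)
    then show ?thesis
      by (intro subset_inA[THEN subsetD]) blast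
  qed
qed

lemma commutator_mult_mem_xpow_multiples:
  fixes a b c :: "'k::field freealg"
  assumes "N \<ge> 1"
    and a: "a * c - c * a \<in> inA N (xpow_multiples N)"
    and b: "b * c - c * b \<in> inA N (xpow_multiples N)"
  shows "a * b * c - c * (a * b) \<in> inA N (xpow_multiples N)"
proof -
  have "a * b * c - c * (a * b) = a * (b * c - c * b) + (a * c - c * a) * b"
    by (simp add: algebra_simps)
  also have "\<dots> \<in> inA N (xpow_multiples N)"
    by (rule lin_closed_add[OF lin_closed_inA[OF lin_closed_xpow_multiples]
          inA_xpow_multiples_mult_left[OF assms(1) b] inA_xpow_multiples_mult_right[OF a]])
  finally show ?thesis .
qed

lemma commutator_mem_xpow_multiples_of_generators:
  fixes a c :: "'k::field freealg"
  assumes "N \<ge> 1"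
    and x: "genx * c - c * genx \<in> inA N (xpow_multiples N)"
    and y: "geny * c - c * geny \<in> inA N (xpow_multiples N)"
  shows "a * c - c * a \<in> inA N (xpow_multiples N)"
proof (induction a rule: freealg_induct)
  case (scal d)
  then show ?case
    using lin_closed_zero[OF lin_closed_inA[OF lin_closed_xpow_multiples]] by (simp add: scal_commute)
next
  case (add f g)
  have "(f + g) * c - c * (f + g) = (f * c - c * f) + (g * c - c * g)"
    by (simp add: algebra_simps)
  also have "\<dots> \<in> inA N (xpow_multiples N)"
    by (rule lin_closed_add[OF lin_closed_inA[OF lin_closed_xpow_multiples] add.IH])
  finally show ?case .
next
  case (mult f g)
  then show ?case
    by (rule commutator_mult_mem_xpow_multiples[OF assms(1)])
qed (fact x y)+

lemma commutator_mem_xpow_multiples: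
  fixes a b :: "'k::field freealg"
  assumes "N \<ge> 1"
  shows "a * b - b * a \<in> inA N (xpow_multiples N)"
proof -
  let ?J = "inA N (xpow_multiples N) :: 'k freealg set"
  have J: "lin_closed ?J"
    by (rule lin_closed_inA[OF lin_closed_xpow_multiples])
  have "genx ^ N * 1 \<in> ?J"
    by (rule subset_inA[THEN subsetD]) blast
  moreover have "relA N \<in> ?J"
    by (rule tsideal_subset_inA[OF lin_closed_zero[OF lin_closed_xpow_multiples], THEN subsetD])
      (rule tsideal_generator)
  ultimately have "genx ^ N * 1 + relA N \<in> ?J"
    by (rule lin_closed_add[OF J])
  then have yx: "geny * genx - genx * geny \<in> ?J"
    by (simp add: relA_def)
  then have xy: "genx * geny - geny * genx \<in> ?J"
    using lin_closed_uminus[OF J] by fastforce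
  have x: "f * genx - genx * f \<in> ?J" for f :: "'k freealg"
    by (rule commutator_mem_xpow_multiples_of_generators[OF assms])
      (use lin_closed_zero[OF J] in simp, rule yx)
  have y: "f * geny - geny * f \<in> ?J" for f :: "'k freealg"
    by (rule commutator_mem_xpow_multiples_of_generators[OF assms])
      (rule xy, use lin_closed_zero[OF J] in simp)
  show ?thesis
  proof (rule commutator_mem_xpow_multiples_of_generators[OF assms])
    show "genx * b - b * genx \<in> ?J"
      using lin_closed_uminus[OF J x[of b]] by simp
    show "geny * b - b * geny \<in> ?J"
      using lin_closed_uminus[OF J y[of b]] by simp
  qed
qed

lemma comm_span_subset_xpow_multiples:
  assumes "N \<ge> 1"
  shows "comm_span \<subseteq> inA N (xpow_multiples N :: 'k::field freealg set)"
proof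
  show "p \<in> inA N (xpow_multiples N)" if "p \<in> comm_span" for p :: "'k freealg"
    using that
  proof induction
    case zero
    then show ?case
      by (rule lin_closed_zero[OF lin_closed_inA[OF lin_closed_xpow_multiples]])
  next
    case (gen c a b)
    then show ?case
      by (intro inA_xpow_multiples_mult_left[OF assms] commutator_mem_xpow_multiples[OF assms])
  next
    case (add p q)
    show ?case
      by (rule lin_closed_add[OF lin_closed_inA[OF lin_closed_xpow_multiples] add.IH])
  qed
qed

abbreviation x_commutators :: "'k::field freealg set" where
  "x_commutators \<equiv> {a * genx - genx * a | a. True}"

lemma lin_closed_x_commutators: "lin_closed (x_commutators :: 'k::field freealg set)"
proof (rule lin_closedI)
  show "0 \<in> (x_commutators :: 'k freealg set)"
    by (intro CollectI exI[of _ 0]) simp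
  show "p + q \<in> x_commutators" if p: "p \<in> x_commutators" and q: "q \<in> x_commutators"
    for p q :: "'k freealg"
  proof -
    obtain a b where "p = a * genx - genx * a" and "q = b * genx - genx * b"
      using p q by blast
    moreover have "(a * genx - genx * a) + (b * genx - genx * b) = (a + b) * genx - genx * (a + b)"
      by (simp add: algebra_simps)
    ultimately show ?thesis
      by blast
  qed
  show "scal c * p \<in> x_commutators" if p: "p \<in> x_commutators" for c and p :: "'k freealg"
  proof -
    obtain a where "p = a * genx - genx * a"
      using p by blast
    then have "scal c * p = (scal c * a) * genx - genx * (scal c * a)"
      by (simp only: right_diff_distrib mult.assoc[symmetric] scal_commute[of c genx])
    then show ?thesis
      by blast
  qed
qed

lemma xpow_mult_inA_x_commutators:
  fixes f :: "'k::field freealg"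
  assumes "f \<in> inA N x_commutators"
  shows "genx ^ i * f \<in> inA N x_commutators"
proof (rule inA_mult_left[OF _ assms])
  show "genx ^ i * s \<in> inA N x_commutators" if s: "s \<in> x_commutators" for s :: "'k freealg"
  proof -
    obtain a where "s = a * genx - genx * a"
      using s by blast
    then have "genx ^ i * s = (genx ^ i * a) * genx - genx * (genx ^ i * a)"
      by (simp add: right_diff_distrib power_commutes flip: mult.assoc)
    then show ?thesis
      by (intro subset_inA[THEN subsetD]) blast
  qed
qed

lemma y_mult_monomial:
  assumes "N \<ge> 1"
  shows "geny * ((genx :: 'k::field freealg) ^ m * geny ^ t)
    - (genx ^ m * geny ^ Suc t + of_nat m * (genx ^ (m + N - 1) * geny ^ t)) \<in> tsideal (relA N)"
proof -
  have "geny * (genx ^ m * geny ^ t) - (genx ^ m * geny ^ Suc t + of_nat m * (genx ^ (m + N - 1) * geny ^ t))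
    = (geny * genx ^ m - genx ^ m * geny - of_nat m * (genx :: 'k freealg) ^ (m + N - 1)) * geny ^ t"
    by (simp add: algebra_simps)
  then show ?thesis
    using tsideal_mult_right[OF y_xpow_commutator[OF assms]] by metis
qed

abbreviation xpow_monomials_below :: "nat \<Rightarrow> nat \<Rightarrow> 'k::field freealg set" where
  "xpow_monomials_below N j \<equiv> {genx ^ (N + i) * geny ^ t | i t. t < j}"

lemma y_mult_inA_xpow_monomials_below:
  fixes f :: "'k::field freealg"
  assumes "N \<ge> 1" and "f \<in> inA N (lin_span (xpow_monomials_below N j))"
  shows "geny * f \<in> inA N (lin_span (xpow_monomials_below N (Suc j)))"
proof (rule inA_mult_left[OF _ assms(2)])
  let ?V = "inA N (lin_span (xpow_monomials_below N (Suc j))) :: 'k freealg set"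
  show "geny * s \<in> ?V" if "s \<in> lin_span (xpow_monomials_below N j)" for s
  proof (rule mult_lin_span_mem[OF lin_closed_inA[OF lin_closed_lin_span] _ that])
    fix g :: "'k freealg"
    assume "g \<in> xpow_monomials_below N j"
    then obtain i t where g: "g = genx ^ (N + i) * geny ^ t" and "t < j"
      by blast
    have a: "genx ^ (N + i) * geny ^ Suc t \<in> (lin_span (xpow_monomials_below N (Suc j)) :: 'k freealg set)"
      using \<open>t < j\<close> by (intro lin_span_base) blast
    have b: "genx ^ (N + i + N - 1) * geny ^ t \<in> (lin_span (xpow_monomials_below N (Suc j)) :: 'k freealg set)"
    proof (rule lin_span_base, intro CollectI exI conjI)
      show "genx ^ (N + i + N - 1) * geny ^ t = genx ^ (N + (i + N - 1)) * (geny :: 'k freealg) ^ t"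
        using assms(1) by (simp add: algebra_simps)
    qed (use \<open>t < j\<close> in simp)
    have "genx ^ (N + i) * geny ^ Suc t + of_nat (N + i) * (genx ^ (N + i + N - 1) * geny ^ t)
        \<in> ?V"
      by (intro subset_inA[THEN subsetD] lin_closed_add[OF lin_closed_lin_span a]
          lin_closed_of_nat[OF lin_closed_lin_span b])
    then show "geny * g \<in> ?V"
      unfolding g by (rule inA_transfer[OF _ y_mult_monomial[OF assms(1)]])
  qed
qed

lemma ypow_x_commutator:
  assumes "N \<ge> 1"
  shows "geny ^ Suc j * genx - genx * geny ^ Suc j - of_nat (Suc j) * (genx ^ N * geny ^ j)
    \<in> inA N (lin_span (xpow_monomials_below N j) :: 'k::field freealg set)"
proof (induction j)
  case 0
  have "relA N \<in> inA N (lin_span (xpow_monomials_below N 0) :: 'k freealg set)"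
    by (rule tsideal_subset_inA[OF lin_span.zero, THEN subsetD]) (rule tsideal_generator)
  then show ?case
    by (simp add: relA_def)
next
  case (Suc j)
  let ?V = "inA N (lin_span (xpow_monomials_below N (Suc j))) :: 'k freealg set"
  have V: "lin_closed ?V"
    by (rule lin_closed_inA[OF lin_closed_lin_span])
  have identity: "Y * (Y * B) * X - X * (Y * (Y * B)) - of_nat (Suc n) * (W * (Y * B))
      = Y * (Y * B * X - X * (Y * B) - of_nat n * (W * B))
        + of_nat n * ((Y * W - W * Y) * B) + (Y * X - X * Y - W) * (Y * B)"
    for X Y W B :: "'k freealg" and n
  proof -
    have "Y * (of_nat n * z) = of_nat n * (Y * z)" for z :: "'k freealg"
      by (metis mult.assoc mult_of_nat_commute)
    then show ?thesis
      by (simp add: algebra_simps)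
  qed
  have "geny ^ Suc (Suc j) * genx - genx * geny ^ Suc (Suc j)
        - of_nat (Suc (Suc j)) * ((genx :: 'k freealg) ^ N * geny ^ Suc j)
      = geny * (geny ^ Suc j * genx - genx * geny ^ Suc j - of_nat (Suc j) * (genx ^ N * geny ^ j))
        + of_nat (Suc j) * ((geny * genx ^ N - genx ^ N * geny) * geny ^ j) + relA N * geny ^ Suc j"
    unfolding relA_def power_Suc by (rule identity)
  also have "\<dots> \<in> ?V"
  proof (intro lin_closed_add[OF V])
    show "geny * (geny ^ Suc j * genx - genx * geny ^ Suc j - of_nat (Suc j) * (genx ^ N * geny ^ j)) \<in> ?V"
      by (rule y_mult_inA_xpow_monomials_below[OF assms Suc.IH])
    show "of_nat (Suc j) * ((geny * genx ^ N - genx ^ N * geny) * geny ^ j) \<in> ?V"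
  proof (rule lin_closed_of_nat[OF V])
    define E where "E = geny * genx ^ N - genx ^ N * geny - of_nat N * (genx :: 'k freealg) ^ (N + N - 1)"
    have member: "of_nat N * (genx ^ (N + (N - 1)) * geny ^ j) \<in> ?V"
      by (intro subset_inA[THEN subsetD] lin_closed_of_nat[OF lin_closed_lin_span] lin_span_base) blast
    have "(geny * genx ^ N - genx ^ N * geny) * geny ^ j
        - of_nat N * (genx ^ (N + (N - 1)) * geny ^ j) = E * geny ^ j"
      unfolding E_def using assms by (simp add: left_diff_distrib mult.assoc)
    also have "\<dots> \<in> tsideal (relA N)"
      unfolding E_def by (rule tsideal_mult_right[OF y_xpow_commutator[OF assms]])
    finally show "(geny * genx ^ N - genx ^ N * geny) * geny ^ j \<in> ?V"
      by (rule inA_transfer[OF member])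
  qed
    show "relA N * geny ^ Suc j \<in> ?V"
      by (rule tsideal_subset_inA[OF lin_span.zero, THEN subsetD])
        (rule tsideal_mult_right[OF tsideal_generator])
  qed
  finally show ?case .
qed

lemma xpow_ypow_mem_x_commutators:
  assumes "N \<ge> 1"
  shows "(genx :: 'k::field_char_0 freealg) ^ N * geny ^ j \<in> inA N x_commutators"
proof (induction j rule: less_induct)
  case (less j)
  let ?K = "inA N x_commutators :: 'k freealg set"
  have K: "lin_closed ?K"
    by (rule lin_closed_inA[OF lin_closed_x_commutators])
  have "lin_span (xpow_monomials_below N j) \<subseteq> ?K"
  proof (rule lin_span_least[OF K], rule subsetI)
    fix g :: "'k freealg"
    assume "g \<in> xpow_monomials_below N j"
    then obtain i t where g: "g = genx ^ (N + i) * geny ^ t" and "t < j"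
      by blast
    have "g = genx ^ i * (genx ^ N * geny ^ t)"
      unfolding g by (metis add.commute mult.assoc power_add)
    then show "g \<in> ?K"
      using xpow_mult_inA_x_commutators[OF less.IH[OF \<open>t < j\<close>]] by simp
  qed
  then have "inA N (lin_span (xpow_monomials_below N j)) \<subseteq> ?K"
    by (rule inA_subset_inA)
  with ypow_x_commutator[OF assms]
  have lower: "geny ^ Suc j * genx - genx * geny ^ Suc j - of_nat (Suc j) * (genx ^ N * geny ^ j) \<in> ?K"
    by (rule subsetD[rotated])
  have "geny ^ Suc j * genx - genx * geny ^ Suc j \<in> ?K"
    by (rule subset_inA[THEN subsetD]) blast
  from lin_closed_add[OF K this lin_closed_uminus[OF K lower]]
  have "of_nat (Suc j) * (genx ^ N * geny ^ j) \<in> ?K"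
    by simp
  then have "scal (inverse (of_nat (Suc j))) * (scal (of_nat (Suc j)) * (genx ^ N * geny ^ j)) \<in> ?K"
    unfolding scal_of_nat by (rule lin_closed_scal[OF K])
  moreover have "inverse (of_nat (Suc j)) * of_nat (Suc j) = (1 :: 'k)"
    by (rule left_inverse[OF of_nat_neq_0])
  ultimately show ?case
    by (simp only: mult.assoc[symmetric] scal_mult scal_one mult_1_left)
qed

abbreviation xy_monomials :: "'k::field freealg set" where
  "xy_monomials \<equiv> {genx ^ i * geny ^ j | i j. True}"

lemma inA_lin_span_xy_monomials:
  assumes "N \<ge> 1"
  shows "f \<in> inA N (lin_span (xy_monomials :: 'k::field freealg set))"
proof -
  let ?S = "lin_span (xy_monomials :: 'k freealg set)"
  have S: "lin_closed (inA N ?S)"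
    by (rule lin_closed_inA[OF lin_closed_lin_span])
  have one: "1 \<in> inA N ?S"
    by (intro subset_inA[THEN subsetD] lin_span_base CollectI exI[of _ 0]) simp
  have "f * 1 \<in> inA N ?S"
  proof (rule inA_left_ideal[OF lin_closed_lin_span _ _ one])
    show "genx * s \<in> inA N ?S" if "s \<in> ?S" for s
    proof (rule mult_lin_span_mem[OF S _ that])
      show "genx * g \<in> inA N ?S" if "g \<in> xy_monomials" for g :: "'k freealg"
      proof -
        obtain i j where g: "g = genx ^ i * geny ^ j"
          using \<open>g \<in> xy_monomials\<close> by blast
        have "genx * g \<in> xy_monomials"
          unfolding g by (intro CollectI exI[of _ "Suc i"] exI[of _ j]) (simp add: mult.assoc)
        then show ?thesis
          by (intro subset_inA[THEN subsetD] lin_span_base)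
      qed
    qed
    show "geny * s \<in> inA N ?S" if "s \<in> ?S" for s
    proof (rule mult_lin_span_mem[OF S _ that])
      show "geny * g \<in> inA N ?S" if "g \<in> xy_monomials" for g :: "'k freealg"
      proof -
        obtain i j where g: "g = genx ^ i * geny ^ j"
          using \<open>g \<in> xy_monomials\<close> by blast
        have "genx ^ i * geny ^ Suc j \<in> ?S"
          by (intro lin_span_base) blast
        moreover have "genx ^ (i + N - 1) * geny ^ j \<in> ?S"
          by (intro lin_span_base) blast
        ultimately have "genx ^ i * geny ^ Suc j + of_nat i * (genx ^ (i + N - 1) * geny ^ j) \<in> ?S"
          by (intro lin_closed_add[OF lin_closed_lin_span] lin_closed_of_nat[OF lin_closed_lin_span])
        then have "genx ^ i * geny ^ Suc j + of_nat i * (genx ^ (i + N - 1) * geny ^ j) \<in> inA N ?S"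
          by (rule subset_inA[THEN subsetD])
        then show ?thesis
          unfolding g by (rule inA_transfer[OF _ y_mult_monomial[OF assms]])
      qed
    qed
  qed
  then show ?thesis
    by simp
qed

lemma xpow_mult_mem_x_commutators:
  assumes "N \<ge> 1"
  shows "(genx :: 'k::field_char_0 freealg) ^ N * a \<in> inA N x_commutators"
proof (rule inA_mult_left[OF _ inA_lin_span_xy_monomials[OF assms]])
  show "genx ^ N * s \<in> inA N x_commutators" if "s \<in> lin_span xy_monomials" for s :: "'k freealg"
  proof (rule mult_lin_span_mem[OF lin_closed_inA[OF lin_closed_x_commutators] _ that])
    show "genx ^ N * g \<in> inA N x_commutators" if "g \<in> xy_monomials" for g :: "'k freealg"
    proof -
      obtain i j where "g = genx ^ i * geny ^ j"
        using \<open>g \<in> xy_monomials\<close> by blast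
      then have "genx ^ N * g = genx ^ i * (genx ^ N * geny ^ j)"
        by (metis mult.assoc power_add add.commute)
      then show ?thesis
        using xpow_mult_inA_x_commutators[OF xpow_ypow_mem_x_commutators[OF assms]] by simp
    qed
  qed
qed

theorem lemma3p2:
  fixes N :: nat
  assumes "N \<ge> 1"
  shows "inA N {a * (genx::'k::field_char_0 freealg) - genx * a | a. True} = inA N comm_span
       \<and> inA N (comm_span :: 'k freealg set) = inA N {genx ^ N * a | a. True}"
proof -
  have "x_commutators \<subseteq> (comm_span :: 'k freealg set)"
    using comm_span.gen[of 1] by (auto simp: scal_one)
  then have "inA N x_commutators \<subseteq> inA N (comm_span :: 'k freealg set)"
    by (intro inA_subset_inA subset_trans[OF _ subset_inA])
  moreover have "inA N (comm_span :: 'k freealg set) \<subseteq> inA N (xpow_multiples N)"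
    by (rule inA_subset_inA[OF comm_span_subset_xpow_multiples[OF assms]])
  moreover have "inA N (xpow_multiples N) \<subseteq> inA N (x_commutators :: 'k freealg set)"
    by (rule inA_subset_inA) (use xpow_mult_mem_x_commutators[OF assms] in blast)
  ultimately show ?thesis
    by blast
qed

end
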